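(* Any GET operation by client $c$ on a key $k$ of partition $p$ in which the client sends $hwv = hwm[:,p]$ (its current row for partition $p$ of the highest-write matrix) satisfies per-key read-your-write consistency: if the operation is issued at time $t$ and served by server $s$, which reads the value of $k$ at time $t'$, then every $w\in ClientWrites(c,k,t)$ is included in $CommittedWrites(s,k,t')$.
   Context: System model. Data is replicated in $D$ datacenters and split into $P$ partitions. In each datacenter $d$, each partition is replicated by a Raft group with a leader $L_d$; Raft guarantees that all members of a group commit the same totally ordered sequence of log entries, each with a log index, in increasing index order. Every version $v$ of a key carries a value, an originating datacenter $v.dc\_id$, the log index $idx(v)$ it received in the Raft log of its originating datacenter, and a hybrid logical clock (HLC) timestamp $v.t=\langle l,c\rangle$; HLC timestamps are compared lexicographically. Writes committed in the group of datacenter $d$ that originated at $d$ are forwarded, in commit order, over FIFO channels to the leaders of the same partition in every other datacenter, which append them (carrying their original index $idx(v)$) to their own Raft logs. Each server $s$ keeps a vector $sv$ of length $D$, initially zero; when $s$ commits a version $v$ it sets $sv[v.dc\_id]:=idx(v)$ and adds $v$ to the version chain of its key. Client protocol. Each client $c$ keeps $D\times P$ matrices $hrm$ (highest read) and $hwm$ (highest write), initially zero, and HLC timestamps $dt_r,dt_w$, initially zero. GET of key $k$ in partition $p$: the client sends vectors $hrv,hwv$ of length $D$ (each either the zero vector or $hrm[:,p]$, resp. $hwm[:,p]$); the server blocks while there is $i$ with $sv[i]<hrv[i]$ or $sv[i]<hwv[i]$; it then returns the version $v$ of $k$ in its version chain with the largest timestamp, together with $v.dc\_id$, $sv[v.dc\_id]$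 and $v.t$; the client sets $hrm[v.dc\_id,p]:=\max(hrm[v.dc\_id,p],sv[v.dc\_id])$ and $dt_r:=\max(dt_r,v.t)$. PUT of key $k$ in partition $p$ at leader $L_d$: the client sends a dependency timestamp $dt$ (one of $0$, $dt_r$, $dt_w$, $\max(dt_r,dt_w)$); the leader updates its HLC $\langle l,c\rangle$ with $dt$ by the rule: $l':=l$; $l:=\max(l',pt,dt.l)$ where $pt$ is its physical clock; then $c:=\max(c,dt.c)+1$ if $l=l'=dt.l$, else $c:=c+1$ if $l=l'$, else $c:=dt.c+1$ if $l=dt.l$, else $c:=0$; it timestamps the new version with the updated HLC value $t$ and $dc\_id=d$, appends it to the Raft log, and after commit replies with $d$, $sv[d]$ and $t$; the client sets $hwm[d,p]:=\max(hwm[d,p],sv[d])$ and $dt_w:=\max(dt_w,t)$. Definitions. $CommittedWrites(s,k,t)$ is the ordered sequence of all writes of key $k$ committed at server $s$ by time $t$; $ClientWrites(c,k,t)$ is the ordered sequence of all writes of $k$ done by client $c$ by time $t$; $ClientReads(c,k,t)$ is the set of writes whose value of $k$ has been read by client $c$ by time $t$. *)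

theory Defs
  imports Main "HOL-Library.Product_Lexorder"
begin

(* HLC timestamps <l,c>, compared lexicographically (Product_Lexorder). *)
type_synonym hlc = "nat \<times> nat"

(* A version of a key: key, value, originating datacenter, log index in the
   Raft log of its originating datacenter, HLC timestamp. *)
record ('k, 'v) version =
  vkey :: 'k
  vval :: 'v
  vdc  :: nat
  vidx :: nat
  vts  :: hlc

(* A server is identified by (datacenter, partition, replica). *)
type_synonym server = "nat \<times> nat \<times> nat"

(* Fixed system parameters: D datacenters 0..<D, P partitions 0..<P,
   R replicas 0..<R per Raft group, partition of each key, and the leader
   replica of the Raft group (d,p). *)
record 'k config =
  nD  :: nat
  nP  :: nat
  nR  :: nat
  pk  :: "'k \<Rightarrow> nat"
  ldr :: "nat \<Rightarrow> nat \<Rightarrow> nat"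

record ('c, 'k, 'v) sstate =
  glog      :: "nat \<Rightarrow> nat \<Rightarrow> ('k, 'v) version list"
      (* Raft log (appended entries) of the group of partition p in datacenter d *)
  committed :: "server \<Rightarrow> ('k, 'v) version list"
  sv        :: "server \<Rightarrow> nat \<Rightarrow> nat"
  chan      :: "nat \<Rightarrow> nat \<Rightarrow> nat \<Rightarrow> ('k, 'v) version list"
      (* FIFO channel from leader of (d,p) to leader of (d',p): chan d d' p *)
  lhlc      :: "nat \<Rightarrow> nat \<Rightarrow> hlc"        (* HLC of leader L_d of partition p *)
  hrm       :: "'c \<Rightarrow> nat \<Rightarrow> nat \<Rightarrow> nat"
  hwm       :: "'c \<Rightarrow> nat \<Rightarrow> nat \<Rightarrow> nat"
  dtr       :: "'c \<Rightarrow> hlc"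
  dtw       :: "'c \<Rightarrow> hlc"
  cwrites   :: "'c \<Rightarrow> ('k, 'v) version list"  (* completed writes of a client, in order *)
  creads    :: "'c \<Rightarrow> ('k, 'v) version set"
  pputs     :: "('c \<times> ('k, 'v) version) set"  (* PUTs appended but not yet replied *)
  pgets     :: "nat \<Rightarrow> ('c \<times> server \<times> 'k \<times> (nat \<Rightarrow> nat) \<times> (nat \<Rightarrow> nat)) option"
      (* pending GET requests by request id: client, server, key, hrv, hwv *)
  used      :: "nat set"   (* request ids already used *)

definition init :: "('c, 'k, 'v) sstate" where
  "init = \<lparr> glog = (\<lambda>_ _. []), committed = (\<lambda>_. []), sv = (\<lambda>_ _. 0),
     chan = (\<lambda>_ _ _. []), lhlc = (\<lambda>_ _. (0, 0)), hrm = (\<lambda>_ _ _. 0), hwm = (\<lambda>_ _ _. 0),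
     dtr = (\<lambda>_. (0, 0)), dtw = (\<lambda>_. (0, 0)), cwrites = (\<lambda>_. []), creads = (\<lambda>_. {}),
     pputs = {}, pgets = (\<lambda>_. None), used = {} \<rparr>"

(* HLC update of a leader with clock value lc, physical clock pt and dependency dt *)
definition hlc_update :: "hlc \<Rightarrow> nat \<Rightarrow> hlc \<Rightarrow> hlc" where
  "hlc_update lc pt dt =
     (let l' = fst lc; c = snd lc; l = max (max l' pt) (fst dt) in
      (l, if l = l' \<and> l' = fst dt then max c (snd dt) + 1
          else if l = l' then c + 1
          else if l = fst dt then snd dt + 1
          else 0))"

datatype ('c, 'k, 'v) event =
    Skip
  | PutReq 'c nat 'k 'v hlc nat
      (* client, datacenter d of leader L_d, key, value, dependency dt, physical clock pt *)
  | PutDone 'c "('k, 'v) version"       (* leader's reply after commit, received by client *)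
  | Commit server                       (* server commits next entry of its group's log *)
  | Recv nat nat nat                    (* leader of (d',p) appends head of chan d d' p *)
  | GetReq 'c server 'k "nat \<Rightarrow> nat" "nat \<Rightarrow> nat" nat
      (* client issues GET of key to server with vectors hrv, hwv and request id *)
  | GetServe nat "('k, 'v) version option"
      (* server serves (reads) pending GET with given id, returning the version read *)

inductive step :: "'k config \<Rightarrow> ('c, 'k, 'v) sstate \<Rightarrow> ('c, 'k, 'v) event \<Rightarrow> ('c, 'k, 'v) sstate \<Rightarrow> bool"
  for cf where
  skip: "step cf \<sigma> Skip \<sigma>"
| put: "\<lbrakk> d < nD cf; p = pk cf k;
          dt \<in> {(0, 0), dtr \<sigma> c, dtw \<sigma> c, max (dtr \<sigma> c) (dtw \<sigma> c)};
          ts = hlc_update (lhlc \<sigma> d p) pt dt;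
          v = \<lparr> vkey = k, vval = x, vdc = d, vidx = Suc (length (glog \<sigma> d p)), vts = ts \<rparr> \<rbrakk>
        \<Longrightarrow> step cf \<sigma> (PutReq c d k x dt pt)
              (\<sigma>\<lparr> glog := (glog \<sigma>)(d := (glog \<sigma> d)(p := glog \<sigma> d p @ [v])),
                  lhlc := (lhlc \<sigma>)(d := (lhlc \<sigma> d)(p := ts)),
                  pputs := insert (c, v) (pputs \<sigma>) \<rparr>)"
| putdone: "\<lbrakk> (c, v) \<in> pputs \<sigma>; d = vdc v; p = pk cf (vkey v); L = (d, p, ldr cf d p);
              v \<in> set (committed \<sigma> L) \<rbrakk>
        \<Longrightarrow> step cf \<sigma> (PutDone c v)
              (\<sigma>\<lparr> hwm := (hwm \<sigma>)(c := (hwm \<sigma> c)(d := (hwm \<sigma> c d)(p := max (hwm \<sigma> c d p) (sv \<sigma> L d)))),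
                  dtw := (dtw \<sigma>)(c := max (dtw \<sigma> c) (vts v)),
                  cwrites := (cwrites \<sigma>)(c := cwrites \<sigma> c @ [v]),
                  pputs := pputs \<sigma> - {(c, v)} \<rparr>)"
| commit: "\<lbrakk> s = (d, p, r); d < nD cf; p < nP cf; r < nR cf;
             length (committed \<sigma> s) < length (glog \<sigma> d p);
             v = glog \<sigma> d p ! length (committed \<sigma> s) \<rbrakk>
        \<Longrightarrow> step cf \<sigma> (Commit s)
              (\<sigma>\<lparr> committed := (committed \<sigma>)(s := committed \<sigma> s @ [v]),
                  sv := (sv \<sigma>)(s := (sv \<sigma> s)(vdc v := vidx v)),
                  chan := (if r = ldr cf d p \<and> vdc v = d
                           then (\<lambda>a b q. if a = d \<and> b < nD cf \<and> b \<noteq> d \<and> q = p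
                                         then chan \<sigma> a b q @ [v] else chan \<sigma> a b q)
                           else chan \<sigma>) \<rparr>)"
| recv: "chan \<sigma> a b p = v # rest
        \<Longrightarrow> step cf \<sigma> (Recv a b p)
              (\<sigma>\<lparr> chan := (chan \<sigma>)(a := (chan \<sigma> a)(b := (chan \<sigma> a b)(p := rest))),
                  glog := (glog \<sigma>)(b := (glog \<sigma> b)(p := glog \<sigma> b p @ [v])) \<rparr>)"
| getreq: "\<lbrakk> s = (d, p, r); d < nD cf; r < nR cf; p = pk cf k;
             hrv \<in> {(\<lambda>_. 0), (\<lambda>i. hrm \<sigma> c i p)};
             hwv \<in> {(\<lambda>_. 0), (\<lambda>i. hwm \<sigma> c i p)};
             rid \<notin> used \<sigma> \<rbrakk>
        \<Longrightarrow> step cf \<sigma> (GetReq c s k hrv hwv rid)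
              (\<sigma>\<lparr> pgets := (pgets \<sigma>)(rid := Some (c, s, k, hrv, hwv)),
                  used := insert rid (used \<sigma>) \<rparr>)"
| getserve_none: "\<lbrakk> pgets \<sigma> rid = Some (c, s, k, hrv, hwv);
             \<forall>i < nD cf. hrv i \<le> sv \<sigma> s i \<and> hwv i \<le> sv \<sigma> s i;
             \<forall>u \<in> set (committed \<sigma> s). vkey u \<noteq> k \<rbrakk>
        \<Longrightarrow> step cf \<sigma> (GetServe rid None) (\<sigma>\<lparr> pgets := (pgets \<sigma>)(rid := None) \<rparr>)"
| getserve_some: "\<lbrakk> pgets \<sigma> rid = Some (c, s, k, hrv, hwv);
             \<forall>i < nD cf. hrv i \<le> sv \<sigma> s i \<and> hwv i \<le> sv \<sigma> s i;
             v \<in> set (committed \<sigma> s); vkey v = k;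
             \<forall>u \<in> set (committed \<sigma> s). vkey u = k \<longrightarrow> vts u \<le> vts v;
             p = pk cf k \<rbrakk>
        \<Longrightarrow> step cf \<sigma> (GetServe rid (Some v))
              (\<sigma>\<lparr> pgets := (pgets \<sigma>)(rid := None),
                  hrm := (hrm \<sigma>)(c := (hrm \<sigma> c)(vdc v := (hrm \<sigma> c (vdc v))(p :=
                            max (hrm \<sigma> c (vdc v) p) (sv \<sigma> s (vdc v))))),
                  dtr := (dtr \<sigma>)(c := max (dtr \<sigma> c) (vts v)),
                  creads := (creads \<sigma>)(c := insert v (creads \<sigma> c)) \<rparr>)"

definition exec :: "'k config \<Rightarrow> (nat \<Rightarrow> ('c, 'k, 'v) sstate) \<Rightarrow> (nat \<Rightarrow> ('c, 'k, 'v) event) \<Rightarrow> bool" where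
  "exec cf \<sigma> evs \<longleftrightarrow> \<sigma> 0 = init \<and> (\<forall>n. step cf (\<sigma> n) (evs n) (\<sigma> (Suc n)))"

definition CommittedWrites :: "(nat \<Rightarrow> ('c, 'k, 'v) sstate) \<Rightarrow> server \<Rightarrow> 'k \<Rightarrow> nat \<Rightarrow> ('k, 'v) version list" where
  "CommittedWrites \<sigma> s k t = filter (\<lambda>v. vkey v = k) (committed (\<sigma> t) s)"

definition ClientWrites :: "(nat \<Rightarrow> ('c, 'k, 'v) sstate) \<Rightarrow> 'c \<Rightarrow> 'k \<Rightarrow> nat \<Rightarrow> ('k, 'v) version list" where
  "ClientWrites \<sigma> c k t = filter (\<lambda>v. vkey v = k) (cwrites (\<sigma> t) c)"

definition ClientReads :: "(nat \<Rightarrow> ('c, 'k, 'v) sstate) \<Rightarrow> 'c \<Rightarrow> 'k \<Rightarrow> nat \<Rightarrow> ('k, 'v) version set" where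
  "ClientReads \<sigma> c k t = {v \<in> creads (\<sigma> t) c. vkey v = k}"

end

theory Submission
  imports Defs "HOL-Library.Sublist"
begin

text \<open>A completed write \<open>w\<close> of client \<open>c\<close> originating at datacenter \<open>i\<close> carries its index
\<open>idx(w)\<close> in the Raft log of \<open>i\<close>, and the PUT reply raised \<open>hwm[i,p]\<close> to at least \<open>idx(w)\<close>,
because the leader had committed \<open>w\<close> and \<open>sv[i]\<close> is the index of the last committed entry
from \<open>i\<close>. A GET sent with \<open>hwv = hwm[:,p]\<close> is served only once \<open>sv[i] \<ge> idx(w)\<close>. Since Raft
commits in log order and forwarding is FIFO, the entries from \<open>i\<close> committed at any server of
partition \<open>p\<close> form a prefix of \<open>i\<close>'s own log, which is sorted by index; so the server has
committed every entry from \<open>i\<close> of index at most \<open>sv[i]\<close>, in particular \<open>w\<close>.\<close>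

lemma sorted_wrt_less_le_last:
  assumes "sorted_wrt (\<lambda>x y. f x < f y) xs" "x \<in> set xs"
  shows "(f x :: 'b :: linorder) \<le> f (last xs)"
  using assms
proof (induction xs rule: rev_induct)
  case (snoc y xs)
  then show ?case by (auto simp: sorted_wrt_append less_imp_le)
qed simp

lemma sorted_wrt_less_prefix_mem:
  assumes "sorted_wrt (\<lambda>x y. f x < f y) ys" "prefix xs ys" "x \<in> set ys"
    and "xs \<noteq> []" "(f x :: 'b :: linorder) \<le> f (last xs)"
  shows "x \<in> set xs"
proof (rule ccontr)
  assume "x \<notin> set xs"
  obtain zs where "ys = xs @ zs" using assms(2) by (auto elim: prefixE)
  with \<open>x \<notin> set xs\<close> assms(1,3,4) have "f (last xs) < f x"
    by (auto simp: sorted_wrt_append)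
  with assms(5) show False by simp
qed

lemma prefix_append_nth:
  assumes "prefix xs ys" "length xs < length ys"
  shows "prefix (xs @ [ys ! length xs]) ys"
proof -
  obtain zs where "ys = xs @ zs" "zs \<noteq> []" using assms by (auto elim: prefixE)
  then show ?thesis by (cases zs) auto
qed

abbreviation from_dc :: "nat \<Rightarrow> ('k, 'v) version list \<Rightarrow> ('k, 'v) version list" where
  "from_dc i \<equiv> filter (\<lambda>v. vdc v = i)"

abbreviation idx_sorted :: "('k, 'v) version list \<Rightarrow> bool" where
  "idx_sorted \<equiv> sorted_wrt (\<lambda>u v. vidx u < vidx v)"

definition last_idx :: "('k, 'v) version list \<Rightarrow> nat" where
  "last_idx xs = (if xs = [] then 0 else vidx (last xs))"

definition replication_invariant :: "'k config \<Rightarrow> ('c, 'k, 'v) sstate \<Rightarrow> bool" where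
  "replication_invariant cf \<sigma> \<longleftrightarrow>
    (\<forall>d p r. prefix (committed \<sigma> (d, p, r)) (glog \<sigma> d p)) \<and>
    (\<forall>a b p. b < nD cf \<longrightarrow> b \<noteq> a \<longrightarrow>
       from_dc a (glog \<sigma> b p) @ chan \<sigma> a b p = from_dc a (committed \<sigma> (a, p, ldr cf a p))) \<and>
    (\<forall>a b p. nD cf \<le> b \<or> b = a \<longrightarrow> chan \<sigma> a b p = []) \<and>
    (\<forall>d p. idx_sorted (from_dc d (glog \<sigma> d p))) \<and>
    (\<forall>d p. \<forall>v \<in> set (glog \<sigma> d p). vdc v = d \<longrightarrow> vidx v \<le> length (glog \<sigma> d p))"

lemma replication_invariantD:
  assumes "replication_invariant cf \<sigma>"
  shows committed_prefix_log: "prefix (committed \<sigma> (d, p, r)) (glog \<sigma> d p)"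
    and forwarded_from_dc: "b < nD cf \<Longrightarrow> b \<noteq> a \<Longrightarrow>
      from_dc a (glog \<sigma> b p) @ chan \<sigma> a b p = from_dc a (committed \<sigma> (a, p, ldr cf a p))"
    and chan_unused: "nD cf \<le> b \<or> b = a \<Longrightarrow> chan \<sigma> a b p = []"
    and local_idx_sorted: "idx_sorted (from_dc d (glog \<sigma> d p))"
    and local_idx_le_length: "v \<in> set (glog \<sigma> d p) \<Longrightarrow> vdc v = d \<Longrightarrow> vidx v \<le> length (glog \<sigma> d p)"
  using assms unfolding replication_invariant_def by auto

lemma committed_from_dc_prefix:
  assumes inv: "replication_invariant cf \<sigma>" and "d < nD cf"
  shows "prefix (from_dc i (committed \<sigma> (d, p, r))) (from_dc i (glog \<sigma> i p))"
proof (cases "d = i")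
  case True
  then show ?thesis using committed_prefix_log[OF inv] by (simp add: filter_mono_prefix)
next
  case False
  have "prefix (from_dc i (committed \<sigma> (d, p, r))) (from_dc i (glog \<sigma> d p))"
    using committed_prefix_log[OF inv] by (rule filter_mono_prefix)
  also have "prefix \<dots> (from_dc i (committed \<sigma> (i, p, ldr cf i p)))"
    unfolding forwarded_from_dc[OF inv \<open>d < nD cf\<close> False, symmetric] by simp
  also have "prefix \<dots> (from_dc i (glog \<sigma> i p))"
    using committed_prefix_log[OF inv] by (rule filter_mono_prefix)
  finally show ?thesis .
qed

definition sv_tracks_commits :: "('c, 'k, 'v) sstate \<Rightarrow> bool" where
  "sv_tracks_commits \<sigma> \<longleftrightarrow> (\<forall>s i. sv \<sigma> s i = last_idx (from_dc i (committed \<sigma> s)))"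

lemma mem_committed_iff_idx_le_sv:
  assumes inv: "replication_invariant cf \<sigma>" and sv: "sv_tracks_commits \<sigma>" and "d < nD cf"
    and w: "w \<in> set (glog \<sigma> (vdc w) p)" "0 < vidx w"
  shows "w \<in> set (committed \<sigma> (d, p, r)) \<longleftrightarrow> vidx w \<le> sv \<sigma> (d, p, r) (vdc w)"
proof -
  let ?C = "from_dc (vdc w) (committed \<sigma> (d, p, r))"
  let ?F = "from_dc (vdc w) (glog \<sigma> (vdc w) p)"
  have prefix: "prefix ?C ?F"
    using committed_from_dc_prefix[OF inv \<open>d < nD cf\<close>] .
  have sorted: "idx_sorted ?F"
    using local_idx_sorted[OF inv] .
  have sv_w: "sv \<sigma> (d, p, r) (vdc w) = last_idx ?C"
    using sv by (simp add: sv_tracks_commits_def)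
  show ?thesis
  proof
    assume "w \<in> set (committed \<sigma> (d, p, r))"
    then have w_C: "w \<in> set ?C" by simp
    have "idx_sorted ?C"
      using sorted prefix by (auto simp: prefix_def sorted_wrt_append)
    then have "vidx w \<le> vidx (last ?C)" using w_C by (rule sorted_wrt_less_le_last)
    moreover have "?C \<noteq> []" using w_C by (auto simp: filter_empty_conv)
    ultimately show "vidx w \<le> sv \<sigma> (d, p, r) (vdc w)" by (simp add: sv_w last_idx_def)
  next
    assume le: "vidx w \<le> sv \<sigma> (d, p, r) (vdc w)"
    then have "?C \<noteq> []" using \<open>0 < vidx w\<close> by (auto simp: sv_w last_idx_def)
    with le have "w \<in> set ?C"
      using sorted_wrt_less_prefix_mem[OF sorted prefix] w by (simp add: sv_w last_idx_def)
    then show "w \<in> set (committed \<sigma> (d, p, r))" by simp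
  qed
qed

inductive_cases step_putE: "step cf \<sigma> (PutReq c d k x dt pt) \<sigma>'"
inductive_cases step_commitE: "step cf \<sigma> (Commit s) \<sigma>'"
inductive_cases step_recvE: "step cf \<sigma> (Recv a b p) \<sigma>'"

lemma replication_invariant_put:
  assumes inv: "replication_invariant cf \<sigma>" and "step cf \<sigma> (PutReq c d k x dt pt) \<sigma>'"
  shows "replication_invariant cf \<sigma>'"
proof -
  let ?p = "pk cf k"
  obtain v where v: "vdc v = d" "vidx v = Suc (length (glog \<sigma> d ?p))"
    and glog': "glog \<sigma>' = (glog \<sigma>)(d := (glog \<sigma> d)(?p := glog \<sigma> d ?p @ [v]))"
    and same: "committed \<sigma>' = committed \<sigma>" "chan \<sigma>' = chan \<sigma>"
    using assms(2) by (elim step_putE) (rule that; simp)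
  have "idx_sorted (from_dc d (glog \<sigma> d ?p) @ [v])"
    using inv v unfolding replication_invariant_def by (fastforce simp: sorted_wrt_append)
  with inv v show ?thesis
    unfolding replication_invariant_def glog' same by (force intro: le_SucI)
qed

lemma replication_invariant_commit:
  assumes inv: "replication_invariant cf \<sigma>" and "step cf \<sigma> (Commit s) \<sigma>'"
  shows "replication_invariant cf \<sigma>'"
proof -
  obtain d p r v where s: "s = (d, p, r)"
    and next_entry: "prefix (committed \<sigma> s @ [v]) (glog \<sigma> d p)"
    and committed': "committed \<sigma>' = (committed \<sigma>)(s := committed \<sigma> s @ [v])"
    and chan': "chan \<sigma>' = (if r = ldr cf d p \<and> vdc v = d
        then (\<lambda>a b q. if a = d \<and> b < nD cf \<and> b \<noteq> d \<and> q = p then chan \<sigma> a b q @ [v] else chan \<sigma> a b q)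
        else chan \<sigma>)"
    and glog': "glog \<sigma>' = glog \<sigma>"
    using assms(2) inv
    by (elim step_commitE) (rule that; auto simp: replication_invariant_def prefix_append_nth)
  show ?thesis
    using inv next_entry unfolding replication_invariant_def committed' chan' glog' s
    by auto
qed

lemma replication_invariant_recv:
  assumes inv: "replication_invariant cf \<sigma>" and "step cf \<sigma> (Recv a b p) \<sigma>'"
  shows "replication_invariant cf \<sigma>'"
proof -
  obtain v rest where chan: "chan \<sigma> a b p = v # rest"
    and chan': "chan \<sigma>' = (chan \<sigma>)(a := (chan \<sigma> a)(b := (chan \<sigma> a b)(p := rest)))"
    and glog': "glog \<sigma>' = (glog \<sigma>)(b := (glog \<sigma> b)(p := glog \<sigma> b p @ [v]))"
    and committed': "committed \<sigma>' = committed \<sigma>"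
    using assms(2) by (elim step_recvE) (rule that; simp)
  have ab: "b < nD cf" "b \<noteq> a"
    using chan_unused[OF inv] chan by (metis list.distinct(1) not_le)+
  have "v \<in> set (from_dc a (committed \<sigma> (a, p, ldr cf a p)))"
    unfolding forwarded_from_dc[OF inv ab, symmetric] chan by simp
  then have "vdc v = a" by simp
  have "from_dc x (glog \<sigma>' y q) @ chan \<sigma>' x y q = from_dc x (committed \<sigma>' (x, q, ldr cf x q))"
    if "y < nD cf" "y \<noteq> x" for x y q
  proof (cases "y = b \<and> q = p")
    case True
    then show ?thesis using forwarded_from_dc[OF inv that, of q] chan \<open>vdc v = a\<close>
      by (cases "x = a") (simp_all add: chan' glog' committed')
  next
    case False
    then show ?thesis using forwarded_from_dc[OF inv that] by (auto simp: chan' glog' committed')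
  qed
  moreover have "chan \<sigma>' x y q = []" if "nD cf \<le> y \<or> y = x" for x y q
    using chan_unused[OF inv that] ab that by (auto simp: chan')
  moreover have "idx_sorted (from_dc d (glog \<sigma>' d q))" for d q
    using local_idx_sorted[OF inv] ab \<open>vdc v = a\<close> by (simp add: glog')
  moreover have "vidx u \<le> length (glog \<sigma>' d q)" if "u \<in> set (glog \<sigma>' d q)" "vdc u = d" for u d q
    using local_idx_le_length[OF inv] that ab \<open>vdc v = a\<close> by (fastforce simp: glog' split: if_splits)
  moreover have "prefix (committed \<sigma>' (d, q, r)) (glog \<sigma>' d q)" for d q r
    using committed_prefix_log[OF inv] by (simp add: glog' committed')
  ultimately show ?thesis unfolding replication_invariant_def by blast
qed

lemma replication_invariant_step:
  assumes inv: "replication_invariant cf \<sigma>" and step: "step cf \<sigma> e \<sigma>'"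
  shows "replication_invariant cf \<sigma>'"
  using step
proof (cases rule: step.cases)
  case put
  then show ?thesis using replication_invariant_put[OF inv] step by simp
next
  case commit
  then show ?thesis using replication_invariant_commit[OF inv] step by simp
next
  case recv
  then show ?thesis using replication_invariant_recv[OF inv] step by simp
qed (use inv in \<open>simp_all add: replication_invariant_def\<close>)

lemma sv_tracks_commits_step:
  assumes "step cf \<sigma> e \<sigma>'" "sv_tracks_commits \<sigma>"
  shows "sv_tracks_commits \<sigma>'"
  using assms by (cases rule: step.cases) (auto simp: sv_tracks_commits_def last_idx_def)

lemma step_glog_mono:
  assumes "step cf \<sigma> e \<sigma>'"
  shows "set (glog \<sigma> d p) \<subseteq> set (glog \<sigma>' d p)"
  using assms by (cases rule: step.cases) auto

definition in_origin_log :: "'k config \<Rightarrow> ('c, 'k, 'v) sstate \<Rightarrow> ('k, 'v) version \<Rightarrow> bool" where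
  "in_origin_log cf \<sigma> v \<longleftrightarrow> v \<in> set (glog \<sigma> (vdc v) (pk cf (vkey v))) \<and> 0 < vidx v \<and> vdc v < nD cf"

definition client_writes_logged :: "'k config \<Rightarrow> ('c, 'k, 'v) sstate \<Rightarrow> bool" where
  "client_writes_logged cf \<sigma> \<longleftrightarrow>
    (\<forall>c. \<forall>w \<in> set (cwrites \<sigma> c). in_origin_log cf \<sigma> w \<and> vidx w \<le> hwm \<sigma> c (vdc w) (pk cf (vkey w))) \<and>
    (\<forall>(c, v) \<in> pputs \<sigma>. in_origin_log cf \<sigma> v)"

lemma in_origin_log_step:
  assumes "step cf \<sigma> e \<sigma>'" "in_origin_log cf \<sigma> v"
  shows "in_origin_log cf \<sigma>' v"
  using assms step_glog_mono unfolding in_origin_log_def by blast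

lemma client_writes_logged_preserved:
  assumes "client_writes_logged cf \<sigma>" "cwrites \<sigma>' = cwrites \<sigma>" "hwm \<sigma>' = hwm \<sigma>" "pputs \<sigma>' = pputs \<sigma>"
    and "\<And>v. in_origin_log cf \<sigma> v \<Longrightarrow> in_origin_log cf \<sigma>' v"
  shows "client_writes_logged cf \<sigma>'"
  using assms unfolding client_writes_logged_def by auto

lemma client_writes_logged_step:
  assumes inv: "replication_invariant cf \<sigma>" and sv: "sv_tracks_commits \<sigma>"
    and logged: "client_writes_logged cf \<sigma>" and step: "step cf \<sigma> e \<sigma>'"
  shows "client_writes_logged cf \<sigma>'"
  using step
proof (cases rule: step.cases)
  case (put d p k dt c ts pt v x)
  then have "in_origin_log cf \<sigma>' v" by (simp add: in_origin_log_def)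
  moreover have "cwrites \<sigma>' = cwrites \<sigma>" "hwm \<sigma>' = hwm \<sigma>" "pputs \<sigma>' = insert (c, v) (pputs \<sigma>)"
    using put by simp_all
  ultimately show ?thesis
    using logged in_origin_log_step[OF step] unfolding client_writes_logged_def by auto
next
  case (putdone c v d p L)
  then have v: "in_origin_log cf \<sigma> v" using logged by (auto simp: client_writes_logged_def)
  then have "vidx v \<le> sv \<sigma> L d"
    using mem_committed_iff_idx_le_sv[OF inv sv] putdone by (auto simp: in_origin_log_def)
  then have v_covered: "vidx v \<le> hwm \<sigma>' c (vdc v) (pk cf (vkey v))"
    using putdone by simp
  have hwm_mono: "hwm \<sigma> c' d' p' \<le> hwm \<sigma>' c' d' p'" for c' d' p'
    using putdone by simp
  have "cwrites \<sigma>' = (cwrites \<sigma>)(c := cwrites \<sigma> c @ [v])" "pputs \<sigma>' \<subseteq> pputs \<sigma>"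
    using putdone by auto
  then show ?thesis
    using logged v v_covered in_origin_log_step[OF step] le_trans[OF _ hwm_mono]
    unfolding client_writes_logged_def by (auto 0 3)
qed (rule client_writes_logged_preserved[OF logged _ _ _ in_origin_log_step[OF step]]; simp)+

lemma exec_invariants:
  assumes "exec cf \<sigma> evs"
  shows "replication_invariant cf (\<sigma> n) \<and> sv_tracks_commits (\<sigma> n) \<and> client_writes_logged cf (\<sigma> n)"
proof (induction n)
  case 0
  show ?case using assms
    by (simp add: exec_def init_def replication_invariant_def sv_tracks_commits_def
        last_idx_def client_writes_logged_def)
next
  case (Suc n)
  have "step cf (\<sigma> n) (evs n) (\<sigma> (Suc n))" using assms by (simp add: exec_def)
  with Suc show ?case
    using replication_invariant_step sv_tracks_commits_step client_writes_logged_step by blast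
qed

lemma exec_glog_mono:
  assumes "exec cf \<sigma> evs" "n \<le> m"
  shows "set (glog (\<sigma> n) d p) \<subseteq> set (glog (\<sigma> m) d p)"
  using assms(2)
proof (induction m rule: dec_induct)
  case (step m)
  with assms(1) show ?case using step_glog_mono unfolding exec_def by blast
qed simp

lemma exec_get_pending:
  assumes "exec cf \<sigma> evs" "evs t = GetReq c s k hrv hwv rid" "Suc t \<le> n"
  shows "rid \<in> used (\<sigma> n) \<and> pgets (\<sigma> n) rid \<in> {None, Some (c, s, k, hrv, hwv)}"
  using assms(3)
proof (induction n rule: dec_induct)
  case base
  have "step cf (\<sigma> t) (GetReq c s k hrv hwv rid) (\<sigma> (Suc t))"
    using assms(1,2) unfolding exec_def by metis
  then show ?case by (cases rule: step.cases) auto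
next
  case (step m)
  have "step cf (\<sigma> m) (evs m) (\<sigma> (Suc m))" using assms(1) by (simp add: exec_def)
  then show ?case using step.IH by (cases rule: step.cases) auto
qed

lemma get_serve_unblocked:
  assumes "step cf \<sigma> (GetServe rid vo) \<sigma>'" "pgets \<sigma> rid \<in> {None, Some (c, s, k, hrv, hwv)}"
    and "i < nD cf"
  shows "hwv i \<le> sv \<sigma> s i"
  using assms(1) by (cases rule: step.cases) (use assms(2,3) in auto)

theorem mainTheorem3:
  fixes cf :: "'k config" and \<sigma> :: "nat \<Rightarrow> ('c, 'k, 'v) sstate"
    and evs :: "nat \<Rightarrow> ('c, 'k, 'v) event"
  assumes "exec cf \<sigma> evs"
    and "\<forall>k. pk cf k < nP cf"
    and "\<forall>d p. ldr cf d p < nR cf"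
    and "evs t = GetReq c s k hrv hwv rid"
    and "hwv = (\<lambda>i. hwm (\<sigma> t) c i (pk cf k))"
    and "t < t'"
    and "evs t' = GetServe rid vo"
  shows "set (ClientWrites \<sigma> c k t) \<subseteq> set (CommittedWrites \<sigma> s k t')"
proof
  fix w assume "w \<in> set (ClientWrites \<sigma> c k t)"
  then have w: "w \<in> set (cwrites (\<sigma> t) c)" "vkey w = k" by (auto simp: ClientWrites_def)
  have "step cf (\<sigma> t) (GetReq c s k hrv hwv rid) (\<sigma> (Suc t))"
    using assms(1,4) unfolding exec_def by metis
  then obtain d r where s: "s = (d, pk cf k, r)" "d < nD cf" by (cases rule: step.cases) auto
  have "in_origin_log cf (\<sigma> t) w" and covered: "vidx w \<le> hwv (vdc w)"
    using exec_invariants[OF assms(1), of t] w assms(5) by (auto simp: client_writes_logged_def)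
  then have origin: "w \<in> set (glog (\<sigma> t') (vdc w) (pk cf k))" "0 < vidx w" "vdc w < nD cf"
    using exec_glog_mono[OF assms(1), of t t'] \<open>t < t'\<close> w(2) by (auto simp: in_origin_log_def)
  have "step cf (\<sigma> t') (GetServe rid vo) (\<sigma> (Suc t'))"
    using assms(1,7) unfolding exec_def by metis
  moreover have "pgets (\<sigma> t') rid \<in> {None, Some (c, s, k, hrv, hwv)}"
    using exec_get_pending[OF assms(1,4)] \<open>t < t'\<close> by (simp add: Suc_le_eq)
  ultimately have "hwv (vdc w) \<le> sv (\<sigma> t') s (vdc w)"
    using origin(3) by (rule get_serve_unblocked)
  with covered have "vidx w \<le> sv (\<sigma> t') s (vdc w)" by simp
  then have "w \<in> set (committed (\<sigma> t') s)"
    using mem_committed_iff_idx_le_sv exec_invariants[OF assms(1), of t'] s origin by blast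
  with w(2) show "w \<in> set (CommittedWrites \<sigma> s k t')" by (simp add: CommittedWrites_def)
qed

end
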